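(* Let $\omega_+=5/2$ and $\Phi^+(q)=\kappa(q+\omega_+)$. Then $\Phi^+(q)=-2\,\frac{\Gamma(\frac12-q)\Gamma(\frac32+q)}{\Gamma(-q)\Gamma(1+q)}$ for $-\frac32<q<\frac12$, which is (the paper's normalization of) the Laplace exponent of a symmetric Cauchy process conditioned to stay positive. Furthermore, the growth-fragmentation $\mathbf{X}$ has no killing and its cumulant function is $\kappa(q)=-2\,\frac{\cos(\pi q)}{\pi}\Gamma(q-1)\Gamma(3-q)$ for $1<q<3$.
   Context: Let $\xi$ be the Lévy process started at $0$ with Laplace exponent $\Psi(q)=-\frac4\pi q+\frac2\pi\int_{y>-\ln 2}\big(e^{qy}-1-q(e^y-1)\big)\frac{e^{-y}\,\mathrm{d}y}{(e^y-1)^2}$, $q<3$, so that its Lévy measure is $\Lambda(\mathrm{d}y)=\frac2\pi\frac{e^{-y}}{(e^y-1)^2}\mathbf{1}_{\{y>-\ln2\}}\mathrm{d}y$. The cumulant function is $\kappa(q)=\Psi(q)+\int_{-\infty}^0(1-e^y)^q\,\Lambda(\mathrm{d}y)$. For $x>0$ let $Z$ started from $x$ be $Z_a=x\exp(\xi(\tau(a/x)))$, $0\le a<\zeta$, with $\tau(a)=\inf\{s\ge0:\int_0^se^{\xi(r)}\mathrm{d}r>a\}$, $\zeta=\inf\{a:Z_a=0\}$; for $x<0$, $Z$ from $x$ is $-Z$ from $-x$. The signed cell system: the Eve cell is $Z$ from $z>0$; each cell gives birth, at each of its jump times, to a child cell which (conditionally independently) is $Z$ started from the negative of that jump, ranked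 by decreasing absolute value of jumps. $\mathbf{X}$ is the (positive) self-similar growth-fragmentation of index $-1$ obtained from this signed cell system by keeping at each time only the sizes of cells $u$ such that $u$ and all its ancestors were born with positive size (i.e. killing every cell with negative size together with its progeny). *)

theory Defs
  imports "HOL-Analysis.Analysis"
begin

definition levy_density :: "real \<Rightarrow> real" where
  "levy_density y = (if y > - ln 2 then (2 / pi) * exp (- y) / (exp y - 1)^2 else 0)"

text \<open>Laplace exponent Psi(q) of xi (meaningful for q < 3).\<close>
definition Psi :: "real \<Rightarrow> real" where
  "Psi q = - (4 / pi) * q +
     (LINT y:{- ln 2<..}|lborel. (exp (q * y) - 1 - q * (exp y - 1)) * levy_density y)"

definition kappa :: "real \<Rightarrow> real" where
  "kappa q = Psi q + (LINT y:{..<0}|lborel. ((1 - exp y) powr q) * levy_density y)"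

definition omega_plus :: real where
  "omega_plus = 5 / 2"

definition Phi_plus :: "real \<Rightarrow> real" where
  "Phi_plus q = kappa (q + omega_plus)"

end

theory Submission
  imports Defs
begin

text \<open>
  For \<open>1 < q < 3\<close> the substitutions \<open>x = e\<^sup>y\<close> on the negative jumps, \<open>x = e\<^sup>-\<^sup>y\<close> on the
  positive jumps and \<open>x = 1 - e\<^sup>y\<close> in the offspring term turn the three integrals making up
  \<open>kappa q\<close> into integrals over subintervals of \<open>(0, 1)\<close> of explicit kernels. Added pairwise
  over \<open>(0, 1/2)\<close> and \<open>(1/2, 1)\<close>, they give the kernel \<open>(x\<^sup>a + x\<^sup>-\<^sup>a - 2) / (1 - x)\<^sup>2\<close> with
  \<open>a = q - 2\<close>, plus elementary functions. Expanding \<open>1 / (1 - x)\<^sup>2\<close> as a power series and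
  integrating termwise yields the partial fraction series of \<open>1 - \<pi> a cot (\<pi> a)\<close>, and the
  reflection formula for \<open>\<Gamma>\<close> rewrites \<open>\<pi> a cot (\<pi> a)\<close> as \<open>cos (\<pi> a) \<Gamma>(1 + a) \<Gamma>(1 - a)\<close>.
  The formula for \<open>Phi_plus\<close> is the one for \<open>kappa\<close> at \<open>q + 5/2\<close>, rewritten by the
  reflection formula once more.
\<close>

section \<open>Reflection formulas and the cotangent series\<close>

lemma Gamma_reflection_real:
  fixes x :: real
  shows "Gamma x * Gamma (1 - x) = pi / sin (pi * x)"
proof -
  have "complex_of_real (Gamma x * Gamma (1 - x)) = of_real pi / sin (of_real pi * of_real x)"
    using Gamma_reflection_complex[of "of_real x"] Gamma_complex_of_real[of x]
      Gamma_complex_of_real[of "1 - x"]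
    by simp
  also have "\<dots> = complex_of_real (pi / sin (pi * x))"
    by (simp add: sin_of_real flip: of_real_mult)
  finally show ?thesis
    by (simp only: of_real_eq_iff)
qed

lemma Digamma_reflection_real:
  fixes x :: real
  assumes "x \<notin> \<int>"
  shows "Digamma (1 - x) - Digamma x = pi * cot (pi * x)"
proof -
  have sin_nz: "sin (pi * x) \<noteq> 0"
    using assms by (auto simp: sin_zero_iff_int2)
  have "1 - x \<notin> \<int>"
    using assms Ints_diff[OF Ints_1, of "1 - x"] by auto
  hence not_pole: "x \<notin> \<int>\<^sub>\<le>\<^sub>0" "1 - x \<notin> \<int>\<^sub>\<le>\<^sub>0"
    using assms nonpos_Ints_subset_Ints by auto
  \<comment> \<open>Differentiate both sides of the reflection formula.\<close>
  have "((\<lambda>t. Gamma t * Gamma (1 - t)) has_field_derivative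
      Gamma x * Gamma (1 - x) * (Digamma x - Digamma (1 - x))) (at x)"
    using not_pole by (auto intro!: derivative_eq_intros simp: algebra_simps)
  moreover have "((\<lambda>t. Gamma t * Gamma (1 - t)) has_field_derivative
      - pi\<^sup>2 * cos (pi * x) / (sin (pi * x))\<^sup>2) (at x)"
    unfolding Gamma_reflection_real using sin_nz
    by (auto intro!: derivative_eq_intros simp: power2_eq_square)
  ultimately have "pi / sin (pi * x) * (Digamma x - Digamma (1 - x))
      = - pi\<^sup>2 * cos (pi * x) / (sin (pi * x))\<^sup>2"
    unfolding Gamma_reflection_real by (rule DERIV_unique)
  also have "\<dots> = pi / sin (pi * x) * (- pi * cot (pi * x))"
    using sin_nz by (simp add: cot_def power2_eq_square)
  finally have "Digamma x - Digamma (1 - x) = - pi * cot (pi * x)"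
    by (rule mult_left_cancel[THEN iffD1, rotated]) (use sin_nz in simp)
  thus ?thesis
    by simp
qed

lemma Digamma_diff_sums:
  fixes a :: real
  assumes "\<bar>a\<bar> < 1"
  shows "(\<lambda>n. 2 * a / ((real n + 1)\<^sup>2 - a\<^sup>2)) sums (Digamma (1 + a) - Digamma (1 - a))"
proof -
  have "(\<lambda>k. (inverse (real (Suc k)) - inverse ((1 + a) + real k))
            - (inverse (real (Suc k)) - inverse ((1 - a) + real k)))
        sums ((Digamma (1 + a) + euler_mascheroni) - (Digamma (1 - a) + euler_mascheroni))"
    using assms summable_Digamma[of "1 + a"] summable_Digamma[of "1 - a"]
    by (intro sums_diff) (auto simp: Digamma_def summable_sums)
  moreover have "(inverse (real (Suc k)) - inverse ((1 + a) + real k))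
            - (inverse (real (Suc k)) - inverse ((1 - a) + real k))
        = 2 * a / ((real k + 1)\<^sup>2 - a\<^sup>2)" for k
  proof -
    have "1 - a + real k > 0" "1 + a + real k > 0"
      using assms by auto
    hence "inverse (1 - a + real k) - inverse (1 + a + real k)
        = ((1 + a + real k) - (1 - a + real k)) / ((1 - a + real k) * (1 + a + real k))"
      by (simp add: field_simps)
    also have "\<dots> = 2 * a / ((real k + 1)\<^sup>2 - a\<^sup>2)"
      by (simp add: algebra_simps power2_eq_square)
    finally show ?thesis
      by (simp add: add.commute)
  qed
  ultimately show ?thesis
    by simp
qed

text \<open>Since \<open>cos (\<pi> a) \<Gamma>(1 + a) \<Gamma>(1 - a) = \<pi> a cot (\<pi> a)\<close>, this is the partial fraction
  expansion of the cotangent.\<close>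

lemma cot_partial_fractions:
  fixes a :: real
  assumes "\<bar>a\<bar> < 1"
  shows "(\<lambda>n. 2 * a\<^sup>2 / ((real n + 1)\<^sup>2 - a\<^sup>2)) sums (1 - cos (pi * a) * Gamma (1 + a) * Gamma (1 - a))"
proof (cases "a = 0")
  case False
  have "a \<notin> \<int>"
    using assms False by (auto elim!: Ints_cases)
  hence "Gamma (1 + a) = a * Gamma a"
    using Gamma_plus1[of a] nonpos_Ints_subset_Ints by (auto simp: add.commute)
  hence Gamma_prod: "Gamma (1 + a) * Gamma (1 - a) = a * (pi / sin (pi * a))"
    by (simp add: mult.assoc Gamma_reflection_real)
  have "a * (Digamma (1 + a) - Digamma (1 - a)) = 1 - a * (Digamma (1 - a) - Digamma a)"
    using False Digamma_plus1[of a] by (simp add: add.commute right_diff_distrib distrib_left)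
  also have "\<dots> = 1 - cos (pi * a) * Gamma (1 + a) * Gamma (1 - a)"
    using Digamma_reflection_real[OF \<open>a \<notin> \<int>\<close>] by (simp add: cot_def mult.assoc Gamma_prod)
  finally show ?thesis
    using sums_mult[OF Digamma_diff_sums[OF assms], of a]
    by (simp add: power2_eq_square mult.assoc mult.left_commute)
qed simp

definition cot_kernel :: "real \<Rightarrow> real \<Rightarrow> real" where
  "cot_kernel a x = (x powr a + x powr (- a) - 2) / (1 - x)\<^sup>2"

lemma powr_add_powr_minus_ge_2:
  fixes x a :: real
  assumes "0 < x"
  shows "2 \<le> x powr a + x powr (- a)"
proof -
  have "x powr a + x powr (- a) - 2 = (x powr a - 1)\<^sup>2 / x powr a"
    using assms by (simp add: powr_minus field_simps power2_eq_square)
  also have "\<dots> \<ge> 0"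
    by simp
  finally show ?thesis
    by simp
qed

lemma has_integral_powr_Ioo_0_1:
  fixes p :: real
  assumes "p > -1"
  shows "((\<lambda>x. x powr p) has_integral 1 / (p + 1)) {0<..<1}"
  using has_integral_powr_from_0[OF assms, of 1] by (simp add: has_integral_Icc_iff_Ioo)

lemma cot_kernel_series_term_has_integral:
  fixes a m :: real
  assumes "\<bar>a\<bar> < m"
  shows "((\<lambda>x. m * x powr (m - 1) * (x powr a + x powr (- a) - 2)) has_integral
          2 * a\<^sup>2 / (m\<^sup>2 - a\<^sup>2)) {0<..<1}"
proof -
  have "((\<lambda>x. m * (x powr (m - 1 + a) + x powr (m - 1 - a) - 2 * x powr (m - 1)))
      has_integral m * (1 / (m - 1 + a + 1) + 1 / (m - 1 - a + 1) - 2 * (1 / (m - 1 + 1))))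
      {0<..<1}"
    using assms
    by (intro has_integral_mult_right has_integral_diff has_integral_add has_integral_cmul
        has_integral_powr_Ioo_0_1) auto
  moreover have "m * (1 / (m - 1 + a + 1) + 1 / (m - 1 - a + 1) - 2 * (1 / (m - 1 + 1)))
      = 2 * a\<^sup>2 / (m\<^sup>2 - a\<^sup>2)"
  proof -
    have "m\<^sup>2 - a\<^sup>2 = (m + a) * (m - a)" "m \<noteq> 0" "m + a \<noteq> 0" "m - a \<noteq> 0"
      using assms by (auto simp: algebra_simps power2_eq_square)
    thus ?thesis
      by (simp add: divide_simps) (simp add: algebra_simps power2_eq_square)
  qed
  ultimately have "((\<lambda>x. m * (x powr (m - 1 + a) + x powr (m - 1 - a) - 2 * x powr (m - 1)))
      has_integral 2 * a\<^sup>2 / (m\<^sup>2 - a\<^sup>2)) {0<..<1}"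
    by simp
  thus ?thesis
    by (rule has_integral_eq[rotated])
       (auto simp: powr_add powr_diff powr_minus algebra_simps divide_inverse)
qed

lemma cot_kernel_has_integral:
  fixes a :: real
  assumes "\<bar>a\<bar> < 1"
  shows "(cot_kernel a has_integral 1 - cos (pi * a) * Gamma (1 + a) * Gamma (1 - a)) {0<..<1}"
proof -
  define T where "T n x = (real n + 1) * x ^ n * (x powr a + x powr (- a) - 2)" for n x
  have T_has_integral: "(T n has_integral 2 * a\<^sup>2 / ((real n + 1)\<^sup>2 - a\<^sup>2)) {0<..<1}" for n
  proof -
    have "\<bar>a\<bar> < real n + 1"
      using assms by linarith
    from cot_kernel_series_term_has_integral[OF this]
    show ?thesis
      by (rule has_integral_eq[rotated]) (simp add: T_def powr_realpow)
  qed
  show ?thesis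
  proof (rule has_integral_monotone_convergence_increasing[where f = "\<lambda>k x. \<Sum>n<k. T n x"])
    show "((\<lambda>x. \<Sum>n<k. T n x) has_integral (\<Sum>n<k. 2 * a\<^sup>2 / ((real n + 1)\<^sup>2 - a\<^sup>2))) {0<..<1}"
      for k
      by (intro has_integral_sum T_has_integral) auto
    show "(\<Sum>n<k. T n x) \<le> (\<Sum>n<Suc k. T n x)" if "x \<in> {0<..<1}" for k x
      using that powr_add_powr_minus_ge_2[of x a] by (simp add: T_def)
    show "(\<lambda>k. \<Sum>n<k. T n x) \<longlonglongrightarrow> cot_kernel a x" if "x \<in> {0<..<1}" for x
    proof -
      have "(\<lambda>n. of_nat (Suc n) * x ^ n) sums (1 / (1 - x)\<^sup>2)"
        using that by (intro geometric_deriv_sums) auto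
      from sums_mult2[OF this, of "x powr a + x powr (- a) - 2"]
      have "(\<lambda>n. T n x) sums cot_kernel a x"
        by (simp add: T_def cot_kernel_def add.commute)
      thus ?thesis
        by (simp add: sums_def)
    qed
    show "(\<lambda>k. \<Sum>n<k. 2 * a\<^sup>2 / ((real n + 1)\<^sup>2 - a\<^sup>2))
        \<longlonglongrightarrow> 1 - cos (pi * a) * Gamma (1 + a) * Gamma (1 - a)"
      using cot_partial_fractions[OF assms] by (simp add: sums_def)
  qed
qed

section \<open>Kernels on the unit interval\<close>

definition powr_convexity_gap :: "real \<Rightarrow> real \<Rightarrow> real" where
  "powr_convexity_gap q x = x powr q - 1 - q * (x - 1)"

lemma powr_convexity_gap_nonneg:
  assumes "1 \<le> q" "0 < x"
  shows "0 \<le> powr_convexity_gap q x"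
proof -
  have "q * (x - 1) \<le> x powr q - 1 powr q"
  proof (rule convex_on_imp_above_tangent[OF powr_convex[OF assms(1)]])
    show "((\<lambda>x. x powr q) has_real_derivative q) (at 1 within {0<..})"
      by (auto intro!: derivative_eq_intros)
  qed (use assms in \<open>auto simp: interior_open\<close>)
  thus ?thesis
    by (simp add: powr_convexity_gap_def)
qed

text \<open>Up to the factor \<open>2 / \<pi>\<close>, these are the integrands of \<open>Psi\<close> on the negative and on the
  positive jumps and the integrand of the offspring term of \<open>kappa\<close>, after the substitutions
  \<open>x = e\<^sup>y\<close>, \<open>x = e\<^sup>-\<^sup>y\<close> and \<open>x = 1 - e\<^sup>y\<close>.\<close>

definition neg_jump_kernel :: "real \<Rightarrow> real \<Rightarrow> real" where
  "neg_jump_kernel q x = powr_convexity_gap q x / (x\<^sup>2 * (1 - x)\<^sup>2)"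

definition pos_jump_kernel :: "real \<Rightarrow> real \<Rightarrow> real" where
  "pos_jump_kernel q x = x\<^sup>2 * powr_convexity_gap q (1 / x) / (1 - x)\<^sup>2"

definition offspring_kernel :: "real \<Rightarrow> real \<Rightarrow> real" where
  "offspring_kernel q x = x powr (q - 2) / (1 - x)\<^sup>2"

lemma jump_kernels_nonneg:
  assumes "1 \<le> q" "0 < x"
  shows "0 \<le> neg_jump_kernel q x" "0 \<le> pos_jump_kernel q x" "0 \<le> offspring_kernel q x"
  using assms powr_convexity_gap_nonneg[of q x] powr_convexity_gap_nonneg[of q "1 / x"]
  by (simp_all add: neg_jump_kernel_def pos_jump_kernel_def offspring_kernel_def)

lemma jump_kernels_continuous_on:
  assumes "S \<subseteq> {0<..<1}"
  shows "continuous_on S (neg_jump_kernel q)" "continuous_on S (pos_jump_kernel q)"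
    "continuous_on S (offspring_kernel q)"
  using assms
  unfolding neg_jump_kernel_def pos_jump_kernel_def offspring_kernel_def powr_convexity_gap_def
  by (auto intro!: continuous_intros)

lemma pos_jump_kernel_eq:
  fixes q x :: real
  assumes "0 < x"
  shows "pos_jump_kernel q x = (x powr (2 - q) - x\<^sup>2 - q * x + q * x\<^sup>2) / (1 - x)\<^sup>2"
proof -
  have "x\<^sup>2 * (1 / x) powr q = x powr (2 - q)"
    using assms by (simp add: powr_diff powr_divide powr_realpow)
  hence "x\<^sup>2 * powr_convexity_gap q (1 / x) = x powr (2 - q) - x\<^sup>2 - q * x + q * x\<^sup>2"
    using assms by (simp add: powr_convexity_gap_def algebra_simps power2_eq_square)
  thus ?thesis
    unfolding pos_jump_kernel_def by simp
qed

lemma pos_jump_kernel_plus_offspring_kernel: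
  fixes q x :: real
  assumes "0 < x" "x < 1"
  shows "pos_jump_kernel q x + offspring_kernel q x
    = cot_kernel (q - 2) x + (q - 1) + (1 + (q - 2) * (x - 1)) / (1 - x)\<^sup>2"
proof -
  have "(P - x\<^sup>2 - q * x + q * x\<^sup>2) / (1 - x)\<^sup>2 + Q / (1 - x)\<^sup>2
      = (Q + P - 2) / (1 - x)\<^sup>2 + (q - 1) + (1 + (q - 2) * (x - 1)) / (1 - x)\<^sup>2" for P Q
  proof -
    have "(P - x\<^sup>2 - q * x + q * x\<^sup>2) / (1 - x)\<^sup>2 + Q / (1 - x)\<^sup>2
        = ((P - x\<^sup>2 - q * x + q * x\<^sup>2) + Q) / (1 - x)\<^sup>2"
      by (simp add: add_divide_distrib)
    also have "(P - x\<^sup>2 - q * x + q * x\<^sup>2) + Q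
        = (Q + P - 2) + (q - 1) * (1 - x)\<^sup>2 + (1 + (q - 2) * (x - 1))"
      by (simp add: algebra_simps power2_eq_square)
    also have "\<dots> / (1 - x)\<^sup>2
        = (Q + P - 2) / (1 - x)\<^sup>2 + (q - 1) + (1 + (q - 2) * (x - 1)) / (1 - x)\<^sup>2"
      using assms by (simp only: add_divide_distrib nonzero_mult_div_cancel_right) simp
    finally show ?thesis .
  qed
  thus ?thesis
    unfolding pos_jump_kernel_eq[OF assms(1)] offspring_kernel_def cot_kernel_def minus_diff_eq .
qed

lemma pos_jump_kernel_plus_neg_jump_kernel:
  fixes q x :: real
  assumes "0 < x" "x < 1"
  shows "pos_jump_kernel q x + neg_jump_kernel q x
    = cot_kernel (q - 2) x + (q - 1) + ((q - 2) * x + q - 1) / x\<^sup>2"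
proof -
  have "x powr q = x\<^sup>2 * x powr (q - 2)"
    using assms by (simp add: powr_diff powr_realpow)
  hence gap: "powr_convexity_gap q x = x\<^sup>2 * x powr (q - 2) - 1 - q * (x - 1)"
    by (simp add: powr_convexity_gap_def)
  have "(P - x\<^sup>2 - q * x + q * x\<^sup>2) / (1 - x)\<^sup>2 + (x\<^sup>2 * Q - 1 - q * (x - 1)) / (x\<^sup>2 * (1 - x)\<^sup>2)
      = (Q + P - 2) / (1 - x)\<^sup>2 + (q - 1) + ((q - 2) * x + q - 1) / x\<^sup>2" for P Q
  proof -
    have "(P - x\<^sup>2 - q * x + q * x\<^sup>2) / (1 - x)\<^sup>2 + (x\<^sup>2 * Q - 1 - q * (x - 1)) / (x\<^sup>2 * (1 - x)\<^sup>2)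
        = (x\<^sup>2 * (P - x\<^sup>2 - q * x + q * x\<^sup>2) + (x\<^sup>2 * Q - 1 - q * (x - 1))) / (x\<^sup>2 * (1 - x)\<^sup>2)"
      using assms by (simp add: add_divide_distrib)
    also have "x\<^sup>2 * (P - x\<^sup>2 - q * x + q * x\<^sup>2) + (x\<^sup>2 * Q - 1 - q * (x - 1))
        = x\<^sup>2 * (Q + P - 2) + (q - 1) * (x\<^sup>2 * (1 - x)\<^sup>2) + ((q - 2) * x + q - 1) * (1 - x)\<^sup>2"
      by (simp add: algebra_simps power2_eq_square)
    also have "\<dots> / (x\<^sup>2 * (1 - x)\<^sup>2)
        = (Q + P - 2) / (1 - x)\<^sup>2 + (q - 1) + ((q - 2) * x + q - 1) / x\<^sup>2"
      using assms by (simp only: add_divide_distrib nonzero_mult_div_cancel_right) simp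
    finally show ?thesis .
  qed
  thus ?thesis
    unfolding pos_jump_kernel_eq[OF assms(1)] neg_jump_kernel_def cot_kernel_def gap minus_diff_eq .
qed

lemma fundamental_theorem_of_calculus_real:
  fixes F f :: "real \<Rightarrow> real"
  assumes "a \<le> b" "\<And>x. x \<in> {a..b} \<Longrightarrow> (F has_real_derivative f x) (at x)"
  shows "(f has_integral F b - F a) {a..b}"
  using assms
  by (intro fundamental_theorem_of_calculus)
     (auto simp: has_real_derivative_iff_has_vector_derivative[symmetric]
       intro: has_field_derivative_at_within)

lemma pos_offspring_correction_has_integral:
  fixes q :: real
  shows "((\<lambda>x. (q - 1) + (1 + (q - 2) * (x - 1)) / (1 - x)\<^sup>2) has_integral
      (q - 1) / 2 + 1 - (q - 2) * ln 2) {0..1/2}"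
proof -
  define F where "F x = (q - 1) * x + 1 / (1 - x) + (q - 2) * ln (1 - x)" for x :: real
  have "((\<lambda>x. (q - 1) + (1 + (q - 2) * (x - 1)) / (1 - x)\<^sup>2) has_integral F (1/2) - F 0) {0..1/2}"
  proof (rule fundamental_theorem_of_calculus_real)
    fix x :: real
    assume "x \<in> {0..1/2}"
    hence "x < 1"
      by simp
    have "(F has_real_derivative (q - 1) + 1 / (1 - x)\<^sup>2 + (q - 2) * (- 1 / (1 - x))) (at x)"
      unfolding F_def using \<open>x < 1\<close> by (auto intro!: derivative_eq_intros simp: power2_eq_square)
    moreover have "(q - 2) * (- 1 / (1 - x)) = (q - 2) * (x - 1) / (1 - x)\<^sup>2"
      using \<open>x < 1\<close> by (simp add: power2_eq_square divide_simps) (simp add: algebra_simps)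
    ultimately show "(F has_real_derivative (q - 1) + (1 + (q - 2) * (x - 1)) / (1 - x)\<^sup>2) (at x)"
      by (simp only: add_divide_distrib add.assoc)
  qed simp
  moreover have "F (1/2) - F 0 = (q - 1) / 2 + 1 - (q - 2) * ln 2"
    by (simp add: F_def ln_div)
  ultimately show ?thesis
    by simp
qed

lemma pos_neg_correction_has_integral:
  fixes q :: real
  shows "((\<lambda>x. (q - 1) + ((q - 2) * x + q - 1) / x\<^sup>2) has_integral
      3 * (q - 1) / 2 + (q - 2) * ln 2) {1/2..1}"
proof -
  define F where "F x = (q - 1) * x + (q - 2) * ln x - (q - 1) / x" for x :: real
  have "((\<lambda>x. (q - 1) + ((q - 2) * x + q - 1) / x\<^sup>2) has_integral F 1 - F (1/2)) {1/2..1}"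
  proof (rule fundamental_theorem_of_calculus_real)
    fix x :: real
    assume "x \<in> {1/2..1}"
    hence "0 < x"
      by simp
    have "(F has_real_derivative (q - 1) + (q - 2) * (1 / x) + (q - 1) / x\<^sup>2) (at x)"
      unfolding F_def using \<open>0 < x\<close>
      by (auto intro!: derivative_eq_intros simp: power2_eq_square field_simps)
    moreover have "(q - 2) * (1 / x) + (q - 1) / x\<^sup>2 = ((q - 2) * x + q - 1) / x\<^sup>2"
      using \<open>0 < x\<close> by (simp add: field_simps power2_eq_square)
    ultimately show "(F has_real_derivative (q - 1) + ((q - 2) * x + q - 1) / x\<^sup>2) (at x)"
      by (simp only: add.assoc)
  qed simp
  moreover have "F 1 - F (1/2) = 3 * (q - 1) / 2 + (q - 2) * ln 2"
    by (simp add: F_def ln_div field_simps)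
  ultimately show ?thesis
    by simp
qed

lemma nonneg_sum_has_integral_split:
  fixes f g :: "'a::euclidean_space \<Rightarrow> real"
  assumes S: "S \<in> sets lebesgue"
    and cont: "continuous_on S f" "continuous_on S g"
    and nonneg: "\<And>x. x \<in> S \<Longrightarrow> 0 \<le> f x" "\<And>x. x \<in> S \<Longrightarrow> 0 \<le> g x"
    and sum: "((\<lambda>x. f x + g x) has_integral I) S"
  shows "f absolutely_integrable_on S" "g absolutely_integrable_on S"
    "integral S f + integral S g = I"
proof -
  have "(\<lambda>x. f x + g x) integrable_on S"
    using sum by blast
  thus f: "f absolutely_integrable_on S" and g: "g absolutely_integrable_on S"
    using nonneg
    by (auto intro!: measurable_bounded_by_integrable_imp_absolutely_integrable
        continuous_imp_measurable_on_sets_lebesgue cont S)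
  have "((\<lambda>x. f x + g x) has_integral integral S f + integral S g) S"
    using f g by (intro has_integral_add integrable_integral set_lebesgue_integral_eq_integral(1))
  thus "integral S f + integral S g = I"
    using sum by (rule has_integral_unique)
qed

lemma jump_kernels_lower_half:
  assumes "1 \<le> q" and K: "cot_kernel (q - 2) integrable_on {0..1/2}"
  shows "pos_jump_kernel q absolutely_integrable_on {0<..<1/2}"
    "offspring_kernel q absolutely_integrable_on {0<..<1/2}"
    "integral {0<..<1/2} (pos_jump_kernel q) + integral {0<..<1/2} (offspring_kernel q)
      = integral {0..1/2} (cot_kernel (q - 2)) + ((q - 1) / 2 + 1 - (q - 2) * ln 2)"
proof -
  have sum: "((\<lambda>x. pos_jump_kernel q x + offspring_kernel q x) has_integral
      integral {0..1/2} (cot_kernel (q - 2)) + ((q - 1) / 2 + 1 - (q - 2) * ln 2)) {0<..<1/2}"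
    using has_integral_add[OF integrable_integral[OF K] pos_offspring_correction_has_integral,
        unfolded has_integral_Icc_iff_Ioo]
    by (rule has_integral_eq[rotated]) (auto simp: pos_jump_kernel_plus_offspring_kernel add.assoc)
  show "pos_jump_kernel q absolutely_integrable_on {0<..<1/2}"
    "offspring_kernel q absolutely_integrable_on {0<..<1/2}"
    "integral {0<..<1/2} (pos_jump_kernel q) + integral {0<..<1/2} (offspring_kernel q)
      = integral {0..1/2} (cot_kernel (q - 2)) + ((q - 1) / 2 + 1 - (q - 2) * ln 2)"
    by (rule nonneg_sum_has_integral_split[OF _ _ _ _ _ sum];
        use assms jump_kernels_nonneg in \<open>auto intro: jump_kernels_continuous_on\<close>)+
qed

lemma jump_kernels_upper_half:
  assumes "1 \<le> q" and K: "cot_kernel (q - 2) integrable_on {1/2..1}"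
  shows "pos_jump_kernel q absolutely_integrable_on {1/2<..<1}"
    "neg_jump_kernel q absolutely_integrable_on {1/2<..<1}"
    "integral {1/2<..<1} (pos_jump_kernel q) + integral {1/2<..<1} (neg_jump_kernel q)
      = integral {1/2..1} (cot_kernel (q - 2)) + (3 * (q - 1) / 2 + (q - 2) * ln 2)"
proof -
  have sum: "((\<lambda>x. pos_jump_kernel q x + neg_jump_kernel q x) has_integral
      integral {1/2..1} (cot_kernel (q - 2)) + (3 * (q - 1) / 2 + (q - 2) * ln 2)) {1/2<..<1}"
    using has_integral_add[OF integrable_integral[OF K] pos_neg_correction_has_integral,
        unfolded has_integral_Icc_iff_Ioo]
    by (rule has_integral_eq[rotated]) (auto simp: pos_jump_kernel_plus_neg_jump_kernel add.assoc)
  show "pos_jump_kernel q absolutely_integrable_on {1/2<..<1}"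
    "neg_jump_kernel q absolutely_integrable_on {1/2<..<1}"
    "integral {1/2<..<1} (pos_jump_kernel q) + integral {1/2<..<1} (neg_jump_kernel q)
      = integral {1/2..1} (cot_kernel (q - 2)) + (3 * (q - 1) / 2 + (q - 2) * ln 2)"
    by (rule nonneg_sum_has_integral_split[OF _ _ _ _ _ sum];
        use assms jump_kernels_nonneg in \<open>auto intro: jump_kernels_continuous_on\<close>)+
qed

lemma jump_kernels_integrals:
  fixes q :: real
  assumes q: "1 < q" "q < 3"
  shows "neg_jump_kernel q absolutely_integrable_on {1/2<..<1}"
    "pos_jump_kernel q absolutely_integrable_on {0<..<1}"
    "offspring_kernel q absolutely_integrable_on {0<..<1/2}"
    "integral {1/2<..<1} (neg_jump_kernel q) + integral {0<..<1} (pos_jump_kernel q)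
       + integral {0<..<1/2} (offspring_kernel q)
     = 2 * q - cos (pi * q) * Gamma (q - 1) * Gamma (3 - q)"
proof -
  let ?K = "cot_kernel (q - 2)"
  have K: "(?K has_integral 1 - cos (pi * q) * Gamma (q - 1) * Gamma (3 - q)) {0..1}"
    using cot_kernel_has_integral[of "q - 2"] q
    by (simp add: has_integral_Icc_iff_Ioo cos_diff algebra_simps)
  hence K_halves: "?K integrable_on {0..1/2}" "?K integrable_on {1/2..1}"
    by (auto intro: integrable_subinterval_real)
  have K_sum: "integral {0..1/2} ?K + integral {1/2..1} ?K
      = 1 - cos (pi * q) * Gamma (q - 1) * Gamma (3 - q)"
    using Henstock_Kurzweil_Integration.integral_combine[OF _ _ has_integral_integrable[OF K]]
      integral_unique[OF K]
    by simp
  note lower = jump_kernels_lower_half[OF _ K_halves(1)]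
    and upper = jump_kernels_upper_half[OF _ K_halves(2)]
  have "(pos_jump_kernel q has_integral
      integral {0<..<1/2} (pos_jump_kernel q) + integral {1/2<..<1} (pos_jump_kernel q)) {0..1}"
    using lower(1) upper(1) q
    by (intro has_integral_combine[where c = "1/2"])
       (auto simp: has_integral_Icc_iff_Ioo
         intro: integrable_integral set_lebesgue_integral_eq_integral(1))
  hence pos: "(pos_jump_kernel q has_integral
      integral {0<..<1/2} (pos_jump_kernel q) + integral {1/2<..<1} (pos_jump_kernel q)) {0<..<1}"
    by (simp add: has_integral_Icc_iff_Ioo)
  show "pos_jump_kernel q absolutely_integrable_on {0<..<1}"
    using pos q jump_kernels_nonneg by (intro nonnegative_absolutely_integrable_1) auto
  show "neg_jump_kernel q absolutely_integrable_on {1/2<..<1}"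
    "offspring_kernel q absolutely_integrable_on {0<..<1/2}"
    using upper(2) lower(2) q by auto
  have "integral {1/2<..<1} (neg_jump_kernel q) + integral {0<..<1} (pos_jump_kernel q)
        + integral {0<..<1/2} (offspring_kernel q)
      = (integral {0<..<1/2} (pos_jump_kernel q) + integral {0<..<1/2} (offspring_kernel q))
        + (integral {1/2<..<1} (pos_jump_kernel q) + integral {1/2<..<1} (neg_jump_kernel q))"
    using integral_unique[OF pos] by simp
  also have "\<dots> = (integral {0..1/2} ?K + integral {1/2..1} ?K) + (2 * q - 1)"
    using lower(3) upper(3) q by (simp add: field_simps)
  finally show "integral {1/2<..<1} (neg_jump_kernel q) + integral {0<..<1} (pos_jump_kernel q)
       + integral {0<..<1/2} (offspring_kernel q)
     = 2 * q - cos (pi * q) * Gamma (q - 1) * Gamma (3 - q)"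
    unfolding K_sum by simp
qed

section \<open>Changes of variables in the Levy measure\<close>

lemma set_borel_integral_substitution:
  fixes f g g' h :: "real \<Rightarrow> real"
  assumes S: "S \<in> sets lebesgue" and inj: "inj_on g S" and image: "g ` S = T"
    and deriv: "\<And>x. x \<in> S \<Longrightarrow> (g has_real_derivative g' x) (at x)"
    and subst: "\<And>x. x \<in> S \<Longrightarrow> \<bar>g' x\<bar> * f (g x) = h x"
    and h: "h absolutely_integrable_on S"
    and f_meas: "set_borel_measurable lborel T f"
  shows "set_integrable lborel T f" "(LINT y:T|lborel. f y) = integral S h"
proof -
  have "(\<lambda>x. \<bar>g' x\<bar> * f (g x)) absolutely_integrable_on S \<and>
        integral S (\<lambda>x. \<bar>g' x\<bar> * f (g x)) = integral S h"
    using h subst by (auto intro: set_integrable_cong[THEN iffD1] integral_cong)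
  moreover have "\<And>x. x \<in> S \<Longrightarrow> (g has_real_derivative g' x) (at x within S)"
    using deriv by (rule has_field_derivative_at_within)
  ultimately have "f absolutely_integrable_on T \<and> integral T f = integral S h"
    unfolding image[symmetric]
    by (subst has_absolute_integral_change_of_variables_1'[symmetric]) (use S inj in auto)
  hence "integrable (completion lborel) (\<lambda>y. indicator T y *\<^sub>R f y)" "integral T f = integral S h"
    unfolding set_integrable_def by auto
  moreover have "(\<lambda>y. indicator T y *\<^sub>R f y) \<in> borel_measurable lborel"
    using f_meas unfolding set_borel_measurable_def .
  ultimately show "set_integrable lborel T f" "(LINT y:T|lborel. f y) = integral S h"
    using integrable_completion set_borel_integral_eq_integral(2) unfolding set_integrable_def
    by metis+
qed

lemma minus_ln_2_less_ln_iff: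
  fixes x :: real
  assumes "0 < x"
  shows "- ln 2 < ln x \<longleftrightarrow> 1/2 < x"
proof -
  have "- ln 2 = ln (1/2 :: real)"
    by (simp add: ln_div)
  thus ?thesis
    using assms by simp
qed

lemma ln_image_half_one: "ln ` {1/2<..<1} = {- ln 2<..<(0::real)}"
proof (intro equalityI subsetI)
  fix y :: real
  assume "y \<in> {- ln 2<..<0}"
  hence "exp y \<in> {1/2<..<1}" "y = ln (exp y)"
    using minus_ln_2_less_ln_iff[of "exp y"] by auto
  thus "y \<in> ln ` {1/2<..<1}"
    by blast
qed (auto simp: minus_ln_2_less_ln_iff)

lemma minus_ln_image_zero_one: "(\<lambda>u. - ln u) ` {0<..<1} = {0::real<..}"
proof (intro equalityI subsetI)
  fix y :: real
  assume "y \<in> {0<..}"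
  hence "exp (- y) \<in> {0<..<1}" "y = - ln (exp (- y))"
    by auto
  thus "y \<in> (\<lambda>u. - ln u) ` {0<..<1}"
    by blast
qed auto

lemma ln_one_minus_image_zero_half: "(\<lambda>t. ln (1 - t)) ` {0<..<1/2} = {- ln 2<..<(0::real)}"
proof -
  have "(\<lambda>t. 1 - t) ` {0<..<1/2} = {1/2<..<1::real}"
  proof (intro equalityI subsetI)
    fix x :: real
    assume "x \<in> {1/2<..<1}"
    thus "x \<in> (\<lambda>t. 1 - t) ` {0<..<1/2}"
      by (intro image_eqI[of _ _ "1 - x"]) auto
  qed auto
  thus ?thesis
    using ln_image_half_one by (simp add: image_image[symmetric, of ln "\<lambda>t. 1 - t"])
qed

definition Psi_integrand :: "real \<Rightarrow> real \<Rightarrow> real" where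
  "Psi_integrand q y = (exp (q * y) - 1 - q * (exp y - 1)) * levy_density y"

definition offspring_integrand :: "real \<Rightarrow> real \<Rightarrow> real" where
  "offspring_integrand q y = (1 - exp y) powr q * levy_density y"

lemma Psi_integrand_measurable:
  assumes "S \<in> sets borel"
  shows "set_borel_measurable lborel S (Psi_integrand q)"
  using assms unfolding set_borel_measurable_def Psi_integrand_def levy_density_def by measurable

lemma offspring_integrand_measurable:
  assumes "S \<in> sets borel"
  shows "set_borel_measurable lborel S (offspring_integrand q)"
  using assms unfolding set_borel_measurable_def offspring_integrand_def levy_density_def
  by measurable

lemma levy_density_ln:
  fixes x :: real
  assumes "1/2 < x"
  shows "levy_density (ln x) = 2 / pi / (x * (x - 1)\<^sup>2)"
  using assms minus_ln_2_less_ln_iff[of x] by (simp add: levy_density_def exp_minus field_simps)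

lemma Psi_integrand_ln:
  fixes x :: real
  assumes "1/2 < x"
  shows "Psi_integrand q (ln x) = 2 / pi * powr_convexity_gap q x / (x * (x - 1)\<^sup>2)"
  using assms
  by (simp add: Psi_integrand_def powr_convexity_gap_def levy_density_ln powr_def mult.commute)

lemma offspring_integrand_ln:
  fixes x :: real
  assumes "1/2 < x"
  shows "offspring_integrand q (ln x) = 2 / pi * (1 - x) powr q / (x * (1 - x)\<^sup>2)"
  using assms by (simp add: offspring_integrand_def levy_density_ln power2_commute)

lemma Psi_integral_neg_jumps:
  assumes "neg_jump_kernel q absolutely_integrable_on {1/2<..<1}"
  shows "set_integrable lborel {- ln 2<..<0} (Psi_integrand q)"
    "(LINT y:{- ln 2<..<0}|lborel. Psi_integrand q y)
      = 2 / pi * integral {1/2<..<1} (neg_jump_kernel q)"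
proof -
  have inj: "inj_on ln {1/2<..<1::real}"
    by (rule inj_onI) simp
  have deriv: "(ln has_real_derivative 1 / x) (at x)" if "x \<in> {1/2<..<1}" for x
    using that by (auto intro!: derivative_eq_intros)
  have "\<bar>1 / x\<bar> * Psi_integrand q (ln x) = 2 / pi * neg_jump_kernel q x" if "x \<in> {1/2<..<1}" for x
    using that by (simp add: Psi_integrand_ln neg_jump_kernel_def power2_commute field_simps)
      (simp add: power2_eq_square)
  from set_borel_integral_substitution[OF _ inj ln_image_half_one deriv this]
  show "set_integrable lborel {- ln 2<..<0} (Psi_integrand q)"
    "(LINT y:{- ln 2<..<0}|lborel. Psi_integrand q y)
      = 2 / pi * integral {1/2<..<1} (neg_jump_kernel q)"
    using assms Psi_integrand_measurable[of "{- ln 2<..<0}" q] by auto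
qed

lemma Psi_integral_pos_jumps:
  assumes "pos_jump_kernel q absolutely_integrable_on {0<..<1}"
  shows "set_integrable lborel {0<..} (Psi_integrand q)"
    "(LINT y:{0<..}|lborel. Psi_integrand q y) = 2 / pi * integral {0<..<1} (pos_jump_kernel q)"
proof -
  have inj: "inj_on (\<lambda>u. - ln u) {0<..<1::real}"
    by (rule inj_onI) simp
  have deriv: "((\<lambda>u. - ln u) has_real_derivative - 1 / u) (at u)" if "u \<in> {0<..<1}" for u
    using that by (auto intro!: derivative_eq_intros)
  have "\<bar>- 1 / u\<bar> * Psi_integrand q (- ln u) = 2 / pi * pos_jump_kernel q u" if "u \<in> {0<..<1}" for u
  proof -
    have "1/2 < 1 / u" "- ln u = ln (1 / u)"
      using that by (auto simp: ln_div)
    thus ?thesis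
      using that by (simp add: Psi_integrand_ln pos_jump_kernel_def field_simps)
  qed
  from set_borel_integral_substitution[OF _ inj minus_ln_image_zero_one deriv this]
  show "set_integrable lborel {0<..} (Psi_integrand q)"
    "(LINT y:{0<..}|lborel. Psi_integrand q y) = 2 / pi * integral {0<..<1} (pos_jump_kernel q)"
    using assms Psi_integrand_measurable[of "{0<..}" q] by auto
qed

lemma offspring_integral:
  assumes "offspring_kernel q absolutely_integrable_on {0<..<1/2}"
  shows "set_integrable lborel {- ln 2<..<0} (offspring_integrand q)"
    "(LINT y:{- ln 2<..<0}|lborel. offspring_integrand q y)
      = 2 / pi * integral {0<..<1/2} (offspring_kernel q)"
proof -
  have inj: "inj_on (\<lambda>t. ln (1 - t)) {0<..<1/2::real}"
    by (rule inj_onI) simp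
  have deriv: "((\<lambda>t. ln (1 - t)) has_real_derivative - 1 / (1 - t)) (at t)"
    if "t \<in> {0<..<1/2}" for t
    using that by (auto intro!: derivative_eq_intros)
  have "\<bar>- 1 / (1 - t)\<bar> * offspring_integrand q (ln (1 - t)) = 2 / pi * offspring_kernel q t"
    if "t \<in> {0<..<1/2}" for t
  proof -
    have "t powr q = t powr (q - 2) * t\<^sup>2"
      using that by (simp add: powr_diff powr_realpow)
    hence "offspring_integrand q (ln (1 - t)) = 2 / pi * t powr (q - 2) / (1 - t)"
      using that by (simp add: offspring_integrand_ln)
    thus ?thesis
      using that by (simp add: offspring_kernel_def power2_eq_square)
  qed
  from set_borel_integral_substitution[OF _ inj ln_one_minus_image_zero_half deriv this]
  show "set_integrable lborel {- ln 2<..<0} (offspring_integrand q)"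
    "(LINT y:{- ln 2<..<0}|lborel. offspring_integrand q y)
      = 2 / pi * integral {0<..<1/2} (offspring_kernel q)"
    using assms offspring_integrand_measurable[of "{- ln 2<..<0}" q] by auto
qed

section \<open>The cumulant function\<close>

lemma Psi_eq_jump_integrals:
  assumes "set_integrable lborel {- ln 2<..<0} (Psi_integrand q)"
    and "set_integrable lborel {0<..} (Psi_integrand q)"
  shows "Psi q = - (4 / pi) * q + (LINT y:{- ln 2<..<0}|lborel. Psi_integrand q y)
      + (LINT y:{0<..}|lborel. Psi_integrand q y)"
proof -
  have minus_ln_2_less: "- ln 2 < y" if "0 < y" for y :: real
    using that ln_gt_zero[of 2] by linarith
  have "(LINT y:{- ln 2<..}|lborel. Psi_integrand q y)
      = (LINT y:{- ln 2<..<0} \<union> {0<..}|lborel. Psi_integrand q y)"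
    unfolding set_lebesgue_integral_def
    by (intro arg_cong[where f = "integral\<^sup>L lborel"] ext)
       (auto simp: Psi_integrand_def minus_ln_2_less split: split_indicator)
  also have "\<dots> = (LINT y:{- ln 2<..<0}|lborel. Psi_integrand q y)
      + (LINT y:{0<..}|lborel. Psi_integrand q y)"
    using assms by (intro set_integral_Un) auto
  finally show ?thesis
    by (simp add: Psi_def Psi_integrand_def)
qed

lemma kappa_eq_Psi_plus_offspring_integral:
  "kappa q = Psi q + (LINT y:{- ln 2<..<0}|lborel. offspring_integrand q y)"
proof -
  have "(LINT y:{..<0}|lborel. (1 - exp y) powr q * levy_density y)
      = (LINT y:{- ln 2<..<0}|lborel. offspring_integrand q y)"
    unfolding set_lebesgue_integral_def
    by (intro arg_cong[where f = "integral\<^sup>L lborel"] ext)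
       (auto simp: offspring_integrand_def levy_density_def split: split_indicator)
  thus ?thesis
    by (simp add: kappa_def)
qed

lemma kappa_closed_form:
  fixes q :: real
  assumes "1 < q" "q < 3"
  shows "kappa q = - 2 * (cos (pi * q) / pi) * Gamma (q - 1) * Gamma (3 - q)"
proof -
  note kernels = jump_kernels_integrals[OF assms]
  note neg = Psi_integral_neg_jumps[OF kernels(1)]
    and pos = Psi_integral_pos_jumps[OF kernels(2)]
    and offspring = offspring_integral[OF kernels(3)]
  have "kappa q = - (4 / pi) * q + 2 / pi * (integral {1/2<..<1} (neg_jump_kernel q)
      + integral {0<..<1} (pos_jump_kernel q) + integral {0<..<1/2} (offspring_kernel q))"
    unfolding kappa_eq_Psi_plus_offspring_integral Psi_eq_jump_integrals[OF neg(1) pos(1)]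
      neg(2) pos(2) offspring(2)
    by (simp add: algebra_simps)
  also have "\<dots> = - 2 * (cos (pi * q) / pi) * Gamma (q - 1) * Gamma (3 - q)"
    unfolding kernels(4) by (simp add: field_simps)
  finally show ?thesis .
qed

lemma Phi_plus_closed_form:
  fixes q :: real
  assumes "- 3/2 < q" "q < 1/2"
  shows "Phi_plus q = - 2 * (Gamma (1/2 - q) * Gamma (3/2 + q)) / (Gamma (- q) * Gamma (1 + q))"
proof -
  have "Phi_plus q = - 2 * (cos (pi * (q + 5/2)) / pi) * Gamma (3/2 + q) * Gamma (1/2 - q)"
    using kappa_closed_form[of "q + 5/2"] assms
    by (simp add: Phi_plus_def omega_plus_def algebra_simps)
  moreover have "cos (pi * (q + 5/2)) = - sin (pi * q)"
  proof -
    have "cos (pi * (q + 5/2)) = cos (pi * q + pi / 2 + 2 * pi)"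
      by (rule arg_cong[where f = cos]) (simp add: algebra_simps)
    thus ?thesis
      by (simp only: cos_periodic) (simp add: cos_add)
  qed
  moreover have "Gamma (- q) * Gamma (1 + q) = pi / sin (pi * (- q))"
    using Gamma_reflection_real[of "- q"] by simp
  ultimately show ?thesis
    by (simp add: divide_divide_eq_right)
qed

theorem proposition4p2:
  shows "(\<forall>q::real. - 3/2 < q \<and> q < 1/2 \<longrightarrow>
            Phi_plus q = - 2 * (Gamma (1/2 - q) * Gamma (3/2 + q)) / (Gamma (- q) * Gamma (1 + q)))
       \<and> Psi 0 = 0
       \<and> (\<forall>q::real. 1 < q \<and> q < 3 \<longrightarrow>
            kappa q = - 2 * (cos (pi * q) / pi) * Gamma (q - 1) * Gamma (3 - q))"
  using Phi_plus_closed_form kappa_closed_form by (simp add: Psi_def)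

end
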